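(* Fix an integer $k\ge 1$. Let $(X_1,\dots,X_n)$ be the $\{0,1\}$-valued Markov chain with $X_1=1$ and the following transitions for $1\le \ell\le n-1$: if $X_\ell=0$ then $X_{\ell+1}=1$, and if $X_\ell=1$ then $X_{\ell+1}$ equals $0$ or $1$ with probability $1/2$ each. Let $A\in\{0,1\}^{m\times n}$ have as rows $m$ independent realizations of this chain. Then every row of $A$ is a feasible measurement for the graph $\mathcal{G}^4_n$. Moreover, there is a function $g$ depending only on $k$ such that the following holds: if $m\ge g(k)\log n$, then the probability that $A$ identifies all $k$-sparse vectors in $\mathbb{R}^n$ tends to $1$ as $n\to\infty$. One admissible choice is $g(k)=(2k+1)2^{4k^2+2k-1}/(2k-1)!$.
   Context: $\mathcal{G}^4_n$ ($n\ge 5$) is the graph on $\{1,\dots,n\}$ in which each node $i$ is adjacent to $i\pm1$ and $i\pm2 \pmod n$. A row $a\in\{0,1\}^n$ is a feasible measurement for a graph $G$ if its support $\{j:a_j=1\}$ induces a connected subgraph of $G$. A vector $x\in\mathbb{R}^n$ is $k$-sparse if it has at most $k$ nonzero entries. $A$ identifies all $k$-sparse vectors if $Ax_1\neq Ax_2$ for every two distinct $k$-sparse vectors $x_1,x_2$. *)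

theory Defs
  imports "HOL-Probability.Probability"
begin

text \<open>Nodes 1..n of the paper are represented by indices 0..n-1 (node i is index i-1);
  the cyclic adjacency is invariant under this shift.\<close>

definition G4_adj :: "nat \<Rightarrow> nat \<Rightarrow> nat \<Rightarrow> bool" where
  "G4_adj n i j \<longleftrightarrow> i < n \<and> j < n \<and> i \<noteq> j \<and>
     ((int j - int i) mod int n \<in> {1, 2, int n - 1, int n - 2})"

definition induces_connected :: "nat \<Rightarrow> nat set \<Rightarrow> bool" where
  "induces_connected n S \<longleftrightarrow>
     (\<forall>u\<in>S. \<forall>v\<in>S. (u, v) \<in> {(a, b). a \<in> S \<and> b \<in> S \<and> G4_adj n a b}\<^sup>*)"

definition row_support :: "bool list \<Rightarrow> nat set" where
  "row_support a = {j. j < length a \<and> a ! j}"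

definition feasible_measurement :: "nat \<Rightarrow> bool list \<Rightarrow> bool" where
  "feasible_measurement n a \<longleftrightarrow> length a = n \<and> induces_connected n (row_support a)"

text \<open>Remaining k states of the chain, started from current state s.\<close>
fun chain_from :: "bool \<Rightarrow> nat \<Rightarrow> bool list pmf" where
  "chain_from s 0 = return_pmf []"
| "chain_from s (Suc k) =
     do { x \<leftarrow> (if s then bernoulli_pmf (1/2) else return_pmf True);
          xs \<leftarrow> chain_from x k;
          return_pmf (x # xs) }"

definition chain_pmf :: "nat \<Rightarrow> bool list pmf" where
  "chain_pmf n = map_pmf (\<lambda>xs. True # xs) (chain_from True (n - 1))"

fun rows_pmf :: "nat \<Rightarrow> nat \<Rightarrow> bool list list pmf" where
  "rows_pmf 0 n = return_pmf []"
| "rows_pmf (Suc m) n =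
     do { r \<leftarrow> chain_pmf n; rs \<leftarrow> rows_pmf m n; return_pmf (r # rs) }"

text \<open>Vectors in R^n: functions nat => real vanishing outside {0..<n}.\<close>
definition vec_in :: "nat \<Rightarrow> (nat \<Rightarrow> real) \<Rightarrow> bool" where
  "vec_in n x \<longleftrightarrow> (\<forall>j\<ge>n. x j = 0)"

definition sparse :: "nat \<Rightarrow> (nat \<Rightarrow> real) \<Rightarrow> bool" where
  "sparse k x \<longleftrightarrow> finite {j. x j \<noteq> 0} \<and> card {j. x j \<noteq> 0} \<le> k"

definition mat_vec :: "nat \<Rightarrow> bool list list \<Rightarrow> (nat \<Rightarrow> real) \<Rightarrow> real list" where
  "mat_vec n A x = map (\<lambda>r. \<Sum>j<n. (if r ! j then 1 else 0) * x j) A"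

definition identifies_sparse :: "nat \<Rightarrow> nat \<Rightarrow> bool list list \<Rightarrow> bool" where
  "identifies_sparse n k A \<longleftrightarrow>
     (\<forall>x1 x2. vec_in n x1 \<longrightarrow> vec_in n x2 \<longrightarrow> sparse k x1 \<longrightarrow> sparse k x2 \<longrightarrow>
        x1 \<noteq> x2 \<longrightarrow> mat_vec n A x1 \<noteq> mat_vec n A x2)"

definition g_const :: "nat \<Rightarrow> real" where
  "g_const k = (2 * real k + 1) * 2 powr (4 * real k ^ 2 + 2 * real k - 1) / fact (2 * k - 1)"

end

theory Submission
  imports Defs
begin

(* Rows are realisations of the {0,1}-chain in which a 0 is always followed by a 1.
   Feasibility: a support without two consecutive gaps is connected in G^4_n, because
   nodes at distance one or two are adjacent.
   Identification: the difference d of two k-sparse vectors is supported on a set T with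
   |T| <= 2k.  If for each such T some row equals 1 on T, and for each j in T (j > 0) some
   row equals 1 on T - {j} and 0 at j, then the measurements force d = 0.  Each of these
   test patterns (made reachable by also prescribing a 1 at j - 1) prescribes at most
   2k + 1 entries, so a single row meets it with probability at least q = 2^-(2k+1).
   There are O(n^(2k)) patterns, so by independence of the rows and a union bound the
   failure probability is at most O(n^(2k)) (1 - q)^m <= O(n^(2k - q c)) for m >= c ln n.
   This tends to 0 whenever q c > 2k, which holds for the explicit constant g(k). *)

(* Adjacency in the circulant graph is symmetric, since negation maps the residues
   {1, 2, n-1, n-2} onto themselves. *)
lemma G4_adj_sym: "G4_adj n i j \<Longrightarrow> G4_adj n j i"
proof -
  assume a: "G4_adj n i j"
  have "(int i - int j) mod int n =
      (if (int j - int i) mod int n = 0 then 0 else int n - (int j - int i) mod int n)"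
    using zmod_zminus1_eq_if[of "int j - int i" "int n"] by simp
  then show ?thesis using a by (auto simp: G4_adj_def)
qed

lemma G4_adj_succ: "n \<ge> 5 \<Longrightarrow> u + d < n \<Longrightarrow> d \<in> {1, 2} \<Longrightarrow> G4_adj n u (u + d)"
  by (auto simp: G4_adj_def)

(* A set of nodes whose gaps have length at most one induces a connected subgraph:
   consecutive elements are one or two apart, hence adjacent. *)
lemma induces_connected_small_gaps:
  assumes n: "n \<ge> 5" and S: "S \<subseteq> {..<n}"
    and gaps: "\<And>u v. u \<in> S \<Longrightarrow> v \<in> S \<Longrightarrow> u < v \<Longrightarrow> u + 1 \<in> S \<or> u + 2 \<in> S"
  shows "induces_connected n S"
proof -
  define R where "R = {(a, b). a \<in> S \<and> b \<in> S \<and> G4_adj n a b}"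
  have "sym R" unfolding R_def sym_def by (auto intro: G4_adj_sym)
  then have symR: "sym (R\<^sup>*)" by (rule sym_rtrancl)
  have step: "(u, u + d) \<in> R" if "u \<in> S" "u + d \<in> S" "d \<in> {1, 2}" for u d
    using that S G4_adj_succ[OF n] unfolding R_def by blast
  have forward: "(u, u + d) \<in> R\<^sup>*" if "u \<in> S" "u + d \<in> S" for d u
    using that
  proof (induction d arbitrary: u rule: less_induct)
    case (less d)
    show ?case
    proof (cases "d = 0")
      case False
      then obtain e where e: "e \<in> {1, 2}" "u + e \<in> S" "e \<le> d"
        using gaps[OF less.prems] less.prems by (cases "d = 1") fastforce+
      then have "(u + e, u + e + (d - e)) \<in> R\<^sup>*"
        using False less by (intro less.IH) auto
      with step[OF less.prems(1) e(2,1)] e(3) show ?thesis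
        by (auto intro: converse_rtrancl_into_rtrancl)
    qed simp
  qed
  have "(u, v) \<in> R\<^sup>*" if "u \<in> S" "v \<in> S" for u v
  proof (cases "u \<le> v")
    case True
    then show ?thesis using forward[of u "v - u"] that by simp
  next
    case False
    then have "(v, u) \<in> R\<^sup>*" using forward[of v "u - v"] that by simp
    then show ?thesis using symR by (auto dest: symD)
  qed
  then show ?thesis unfolding induces_connected_def R_def by blast
qed
definition no_adjacent_zeros :: "bool list \<Rightarrow> bool" where
  "no_adjacent_zeros r \<longleftrightarrow> (\<forall>i. Suc i < length r \<longrightarrow> r ! i \<or> r ! Suc i)"

lemma no_adjacent_zeros_Cons:
  "no_adjacent_zeros (a # r) \<longleftrightarrow> (r \<noteq> [] \<longrightarrow> a \<or> hd r) \<and> no_adjacent_zeros r"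
  by (cases r) (auto simp: no_adjacent_zeros_def nth_Cons split: nat.splits)

lemma chain_from_Suc:
  "chain_from s (Suc len) =
     bind_pmf (if s then bernoulli_pmf (1/2) else return_pmf True)
       (\<lambda>x. map_pmf (Cons x) (chain_from x len))"
  by (simp add: map_pmf_def)

lemma set_chain_from:
  "xs \<in> set_pmf (chain_from s len) \<Longrightarrow> length xs = len \<and> no_adjacent_zeros (s # xs)"
proof (induction len arbitrary: s xs)
  case (Suc len)
  then obtain x xs' where "x \<in> set_pmf (if s then bernoulli_pmf (1/2) else return_pmf True)"
    and "xs' \<in> set_pmf (chain_from x len)" and "xs = x # xs'"
    by (auto simp: chain_from_Suc)
  with Suc.IH show ?case by (cases s) (auto simp: no_adjacent_zeros_Cons)
qed (simp add: no_adjacent_zeros_def)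

(* Starting the chain with X_1 = 1 is the same as starting it from a virtual state 0. *)
lemma chain_pmf_eq_chain_from: "n \<ge> 1 \<Longrightarrow> chain_pmf n = chain_from False n"
  by (cases n) (simp_all add: chain_pmf_def bind_return_pmf map_pmf_def)

lemma set_chain_pmf:
  "n \<ge> 1 \<Longrightarrow> r \<in> set_pmf (chain_pmf n) \<Longrightarrow> length r = n \<and> no_adjacent_zeros r"
  using set_chain_from[of r False n] by (simp add: chain_pmf_eq_chain_from no_adjacent_zeros_Cons)

lemma set_rows_pmf: "A \<in> set_pmf (rows_pmf m n) \<Longrightarrow> r \<in> set A \<Longrightarrow> r \<in> set_pmf (chain_pmf n)"
  by (induction m arbitrary: A) auto

lemma feasible_chain_row:
  assumes n: "n \<ge> 5" and r: "r \<in> set_pmf (chain_pmf n)"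
  shows "feasible_measurement n r"
proof -
  from set_chain_pmf[OF _ r] n have len: "length r = n" and nz: "no_adjacent_zeros r" by auto
  have "induces_connected n (row_support r)"
  proof (rule induces_connected_small_gaps[OF n])
    show "row_support r \<subseteq> {..<n}" using len by (auto simp: row_support_def)
    fix u v assume "u \<in> row_support r" "v \<in> row_support r" "u < v"
    then show "u + 1 \<in> row_support r \<or> u + 2 \<in> row_support r"
      using nz len unfolding no_adjacent_zeros_def row_support_def
      by (cases "u + 1 = v") (auto dest: spec[of _ "Suc u"])
  qed
  with len show ?thesis by (simp add: feasible_measurement_def)
qed
lemma prob_bind_pmf:
  "measure_pmf.prob (bind_pmf p f) X = measure_pmf.expectation p (\<lambda>x. measure_pmf.prob (f x) X)"
  unfolding measure_pmf_bind
  by (rule measure_pmf.measure_bind[where N="count_space UNIV"])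
    (auto simp: space_subprob_algebra measure_pmf_in_subprob_algebra
      prob_space_imp_subprob_space measure_pmf.prob_space_axioms)

(* A partial prescription c of entries (None = unconstrained) and the rows that obey it. *)
definition matches :: "(nat \<Rightarrow> bool option) \<Rightarrow> bool list \<Rightarrow> bool" where
  "matches c xs \<longleftrightarrow> (\<forall>i<length xs. \<forall>b. c i = Some b \<longrightarrow> xs ! i = b)"

lemma matches_Cons:
  "matches c (x # xs) \<longleftrightarrow> c 0 \<in> {None, Some x} \<and> matches (\<lambda>i. c (Suc i)) xs"
  by (cases "c 0") (auto simp: matches_def nth_Cons less_Suc_eq_0_disj split: nat.splits)

definition reachable_pattern :: "bool \<Rightarrow> (nat \<Rightarrow> bool option) \<Rightarrow> bool" where
  "reachable_pattern s c \<longleftrightarrow>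
     (\<forall>i. c i = Some False \<longrightarrow> (case i of 0 \<Rightarrow> s | Suc j \<Rightarrow> c j = Some True))"

lemma card_constrained_Suc:
  "card {i. c i \<noteq> None \<and> i < Suc len} =
     card {i. c (Suc i) \<noteq> None \<and> i < len} + (if c 0 = None then 0 else 1)"
  using card_less_Suc[of "{i. c i \<noteq> None}" len] card_less_Suc2[of "{i. c i \<noteq> None}" len]
  by (auto simp: conj_commute)

(* Each prescribed entry costs at most one fair coin;
   the constraint that a 0 follows a 1 makes sure no prescribed entry is impossible. *)
lemma chain_from_matches_lb:
  assumes "reachable_pattern s c"
  shows "measure_pmf.prob (chain_from s len) {xs. matches c xs}
           \<ge> (1/2) ^ card {i. c i \<noteq> None \<and> i < len}"
  using assms
proof (induction len arbitrary: s c)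
  case (Suc len)
  define c' where "c' = (\<lambda>i. c (Suc i))"
  define w :: real where "w = (1/2) ^ card {i. c' i \<noteq> None \<and> i < len}"
  define g where "g x = measure_pmf.prob (map_pmf (Cons x) (chain_from x len)) {xs. matches c xs}"
    for x
  have g_nonneg: "0 \<le> g x" for x by (simp add: g_def)
  have g_lb: "w \<le> g x" if "c 0 \<in> {None, Some x}" for x
  proof -
    have "reachable_pattern x c'"
      using Suc.prems that unfolding reachable_pattern_def c'_def
      by (auto split: nat.splits)
    moreover have "g x = measure_pmf.prob (chain_from x len) {xs. matches c' xs}"
      using that by (simp add: g_def vimage_def matches_Cons c'_def)
    ultimately show ?thesis unfolding w_def using Suc.IH by simp
  qed
  have prob: "measure_pmf.prob (chain_from s (Suc len)) {xs. matches c xs} =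
      (if s then g True / 2 + g False / 2 else g True)"
    unfolding chain_from_Suc prob_bind_pmf g_def[symmetric] by simp
  have count: "(1/2::real) ^ card {i. c i \<noteq> None \<and> i < Suc len} =
      (if c 0 = None then w else w / 2)"
    unfolding card_constrained_Suc w_def c'_def by simp
  show ?case
  proof (cases s)
    case False
    then have "c 0 \<noteq> Some False"
      using Suc.prems unfolding reachable_pattern_def by (auto dest: spec[of _ 0])
    then have "c 0 \<in> {None, Some True}" by (cases "c 0") auto
    then show ?thesis
      using False g_lb[of True] g_nonneg[of True] unfolding prob count by auto
  next
    case True
    show ?thesis
    proof (cases "c 0")
      case None
      then show ?thesis using True g_lb[of True] g_lb[of False] unfolding prob count by simp
    next
      case (Some b)
      then have "w \<le> g b" using g_lb by simp
      moreover have "g b \<le> g True + g False" using g_nonneg by (cases b) auto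
      ultimately show ?thesis using True Some unfolding prob count by simp
    qed
  qed
qed (simp add: matches_def)

lemma chain_pmf_matches_lb:
  assumes "n \<ge> 1" and "reachable_pattern False c"
  shows "measure_pmf.prob (chain_pmf n) {r. matches c r} \<ge> (1/2) ^ card {i. c i \<noteq> None \<and> i < n}"
  using chain_from_matches_lb[OF assms(2)] by (simp add: chain_pmf_eq_chain_from[OF assms(1)])
(* The test patterns for a candidate support T (|T| <= 2k): for j = 0 the row must be 1 on
   all of T; for j in T, j > 0, it must be 1 on T - {j}, 0 at j and 1 at j - 1, so that
   the pattern is reachable.  Position 0 can never be 0, so j = 0 encodes "no zero". *)
definition test_pattern :: "nat set \<Rightarrow> nat \<Rightarrow> nat \<Rightarrow> bool option" where
  "test_pattern T j i =
     (if j \<noteq> 0 \<and> i = j then Some False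
      else if i \<in> T \<or> (j \<noteq> 0 \<and> i = j - 1) then Some True else None)"

definition test_patterns :: "nat \<Rightarrow> nat \<Rightarrow> (nat set \<times> nat) set" where
  "test_patterns n k = Sigma {T. T \<subseteq> {..<n} \<and> card T \<le> 2 * k} (\<lambda>T. insert 0 T)"

definition covers_patterns :: "nat \<Rightarrow> nat \<Rightarrow> bool list list \<Rightarrow> bool" where
  "covers_patterns n k A \<longleftrightarrow>
     (\<forall>(T, j) \<in> test_patterns n k. \<exists>r\<in>set A. matches (test_pattern T j) r)"

lemma reachable_test_pattern: "reachable_pattern False (test_pattern T j)"
  by (auto simp: reachable_pattern_def test_pattern_def split: nat.splits)

lemma matched_row_on_support:
  assumes "matches (test_pattern T j) r" and "T \<subseteq> {..<length r}" and "j \<in> insert 0 T"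
  shows "{i \<in> T. r ! i} = (if j = 0 then T else T - {j})"
proof -
  have "r ! i \<longleftrightarrow> j = 0 \<or> i \<noteq> j" if "i \<in> T" for i
    using assms that unfolding matches_def test_pattern_def by (auto dest!: spec[of _ i])
  then show ?thesis by auto
qed

lemma zero_of_vanishing_sums:
  fixes d :: "'a \<Rightarrow> 'b :: ab_group_add"
  assumes T: "finite T" and total: "sum d T = 0"
    and omit: "\<And>j. j \<in> T \<Longrightarrow> j \<noteq> a \<Longrightarrow> sum d (T - {j}) = 0"
  shows "\<forall>j\<in>T. d j = 0"
proof -
  have others: "d j = 0" if "j \<in> T" "j \<noteq> a" for j
    using sum.remove[OF T that(1), of d] total omit[OF that] by simp
  moreover have "d a = 0" if "a \<in> T"
    using sum.remove[OF T that, of d] total others by (simp add: sum.neutral)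
  ultimately show ?thesis by blast
qed

lemma row_sum_on_support:
  fixes d :: "nat \<Rightarrow> real"
  assumes "T \<subseteq> {..<n}" and "\<And>i. i \<notin> T \<Longrightarrow> d i = 0"
  shows "(\<Sum>j<n. (if r ! j then 1 else 0) * d j) = sum d {i \<in> T. r ! i}"
proof -
  have fin: "finite T" using assms(1) finite_subset by blast
  have "(\<Sum>j<n. (if r ! j then 1 else 0) * d j) = (\<Sum>j\<in>T. (if r ! j then 1 else 0) * d j)"
    using assms by (intro sum.mono_neutral_right) auto
  also have "\<dots> = (\<Sum>j\<in>T. if r ! j then d j else 0)" by (intro sum.cong) auto
  also have "\<dots> = sum d {i \<in> T. r ! i}" using fin by (simp add: sum.inter_filter)
  finally show ?thesis .
qed

(* Deterministic core: covering all test patterns suffices for identifying k-sparse vectors,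
   since the difference of two k-sparse vectors is supported on at most 2k positions. *)
lemma identifies_if_covers:
  assumes cover: "covers_patterns n k A" and len: "\<forall>r\<in>set A. length r = n"
  shows "identifies_sparse n k A"
  unfolding identifies_sparse_def
proof (intro allI impI notI)
  fix x1 x2 assume v1: "vec_in n x1" and v2: "vec_in n x2" and s1: "sparse k x1"
    and s2: "sparse k x2" and ne: "x1 \<noteq> x2" and eq: "mat_vec n A x1 = mat_vec n A x2"
  define d where "d j = x1 j - x2 j" for j
  define T where "T = {j. d j \<noteq> 0}"
  have T_sub: "T \<subseteq> {..<n}"
  proof
    fix j assume "j \<in> T"
    then have "x1 j \<noteq> 0 \<or> x2 j \<noteq> 0" by (auto simp: T_def d_def)
    then show "j \<in> {..<n}" using v1 v2 by (auto simp: vec_in_def not_less[symmetric])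
  qed
  then have fin: "finite T" by (rule finite_subset) simp
  have "card T \<le> card ({j. x1 j \<noteq> 0} \<union> {j. x2 j \<noteq> 0})"
    using s1 s2 by (intro card_mono) (auto simp: sparse_def T_def d_def)
  also have "\<dots> \<le> 2 * k"
    using card_Un_le[of "{j. x1 j \<noteq> 0}" "{j. x2 j \<noteq> 0}"] s1 s2 by (simp add: sparse_def)
  finally have "card T \<le> 2 * k" .
  then have pattern: "(T, j) \<in> test_patterns n k" if "j \<in> insert 0 T" for j
    using T_sub that by (simp add: test_patterns_def)
  have row_zero: "sum d {i \<in> T. r ! i} = 0" if "r \<in> set A" for r
  proof -
    have "(\<Sum>j<n. (if r ! j then 1 else 0) * x1 j) = (\<Sum>j<n. (if r ! j then 1 else 0) * x2 j)"
      using eq that unfolding mat_vec_def by (simp add: map_eq_conv)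
    then have "(\<Sum>j<n. (if r ! j then 1 else 0) * d j) = 0"
      by (simp add: d_def right_diff_distrib sum_subtractf)
    then show ?thesis using row_sum_on_support[OF T_sub, of d r] by (simp add: T_def)
  qed
  have sum_omit: "sum d (if j = 0 then T else T - {j}) = 0" if j: "j \<in> insert 0 T" for j
  proof -
    obtain r where r: "r \<in> set A" "matches (test_pattern T j) r"
      using cover pattern[OF j] unfolding covers_patterns_def by fast
    then have "{i \<in> T. r ! i} = (if j = 0 then T else T - {j})"
      using matched_row_on_support[of T j r] len T_sub j by simp
    then show ?thesis using row_zero[OF r(1)] by simp
  qed
  have "\<forall>j\<in>T. d j = 0"
    using zero_of_vanishing_sums[OF fin, of d 0] sum_omit by (metis insertCI)
  then have "x1 = x2" by (auto simp: fun_eq_iff T_def d_def)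
  with ne show False by contradiction
qed
(* Each test pattern prescribes at most 2k + 1 positions, hence is met with probability
   at least 2^-(2k+1). *)
lemma test_pattern_prob:
  assumes n: "n \<ge> 1" and p: "(T, j) \<in> test_patterns n k"
  shows "measure_pmf.prob (chain_pmf n) {r. matches (test_pattern T j) r} \<ge> (1/2) ^ (2 * k + 1)"
proof -
  from p have T: "T \<subseteq> {..<n}" "card T \<le> 2 * k" and j: "j \<in> insert 0 T"
    by (auto simp: test_patterns_def)
  have fin: "finite T" using T(1) finite_subset by blast
  have "{i. test_pattern T j i \<noteq> None \<and> i < n} \<subseteq> insert (j - 1) T"
    using j by (auto simp: test_pattern_def split: if_splits)
  then have "card {i. test_pattern T j i \<noteq> None \<and> i < n} \<le> card (insert (j - 1) T)"
    using fin by (intro card_mono) auto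
  also have "\<dots> \<le> 2 * k + 1" using T(2) fin by (simp add: card_insert_if)
  finally have "(1/2::real) ^ (2 * k + 1) \<le> (1/2) ^ card {i. test_pattern T j i \<noteq> None \<and> i < n}"
    by (intro power_decreasing) auto
  also have "\<dots> \<le> measure_pmf.prob (chain_pmf n) {r. matches (test_pattern T j) r}"
    by (rule chain_pmf_matches_lb[OF n reachable_test_pattern])
  finally show ?thesis .
qed

lemma rows_pmf_Suc:
  "rows_pmf (Suc m) n = map_pmf (\<lambda>(r, rs). r # rs) (pair_pmf (chain_pmf n) (rows_pmf m n))"
  by (simp add: pair_pmf_def map_pmf_def bind_assoc_pmf bind_return_pmf)

lemma prob_no_row:
  "measure_pmf.prob (rows_pmf m n) {A. \<forall>r\<in>set A. \<not> P r} =
     measure_pmf.prob (chain_pmf n) {r. \<not> P r} ^ m"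
proof (induction m)
  case (Suc m)
  have "(\<lambda>(r, rs). r # rs) -` {A. \<forall>r\<in>set A. \<not> P r} = {r. \<not> P r} \<times> {A. \<forall>r\<in>set A. \<not> P r}"
    by auto
  then have "measure_pmf.prob (rows_pmf (Suc m) n) {A. \<forall>r\<in>set A. \<not> P r} =
      measure_pmf.prob (chain_pmf n) {r. \<not> P r} * measure_pmf.prob (rows_pmf m n) {A. \<forall>r\<in>set A. \<not> P r}"
    unfolding rows_pmf_Suc measure_map_pmf
    by (simp add: measure_pmf_prob_product countableI_type)
  then show ?case using Suc by simp
qed simp

lemma card_small_subsets:
  assumes "n \<ge> 1"
  shows "card {T. T \<subseteq> {..<n} \<and> card T \<le> s} \<le> (s + 1) * n ^ s"
proof -
  have "{T. T \<subseteq> {..<n} \<and> card T \<le> s} = (\<Union>i\<le>s. {T. T \<subseteq> {..<n} \<and> card T = i})" by auto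
  then have "card {T. T \<subseteq> {..<n} \<and> card T \<le> s} \<le> (\<Sum>i\<le>s. card {T. T \<subseteq> {..<n} \<and> card T = i})"
    by (simp add: card_UN_le)
  also have "\<dots> \<le> (\<Sum>i\<le>s. n ^ s)"
  proof (rule sum_mono)
    fix i assume "i \<in> {..s}"
    have "card {T. T \<subseteq> {..<n} \<and> card T = i} = n choose i"
      using n_subsets[of "{..<n}" i] by simp
    also have "\<dots> \<le> n ^ i"
      by (cases "i \<le> n") (simp_all add: binomial_le_pow binomial_eq_0)
    also have "\<dots> \<le> n ^ s" using \<open>i \<in> {..s}\<close> assms by (intro power_increasing) auto
    finally show "card {T. T \<subseteq> {..<n} \<and> card T = i} \<le> n ^ s" .
  qed
  finally show ?thesis by simp
qed

lemma card_test_patterns: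
  assumes "n \<ge> 1"
  shows "card (test_patterns n k) \<le> (2 * k + 1) ^ 2 * n ^ (2 * k)"
proof -
  define S where "S = {T. T \<subseteq> {..<n} \<and> card T \<le> 2 * k}"
  have fin: "finite S" unfolding S_def by (rule finite_subset[of _ "Pow {..<n}"]) auto
  have "card (test_patterns n k) = (\<Sum>T\<in>S. card (insert 0 T))"
    unfolding test_patterns_def S_def[symmetric]
    by (rule card_SigmaI[OF fin]) (auto simp: S_def intro: finite_subset)
  also have "\<dots> \<le> (\<Sum>T\<in>S. 2 * k + 1)"
  proof (rule sum_mono)
    fix T assume "T \<in> S"
    then have "finite T" "card T \<le> 2 * k" by (auto simp: S_def intro: finite_subset)
    then show "card (insert 0 T) \<le> 2 * k + 1" by (simp add: card_insert_if)
  qed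
  also have "\<dots> = card S * (2 * k + 1)" by simp
  also have "\<dots> \<le> (2 * k + 1) * n ^ (2 * k) * (2 * k + 1)"
    unfolding S_def using card_small_subsets[OF assms] by (intro mult_le_mono1) simp
  also have "\<dots> = (2 * k + 1) ^ 2 * n ^ (2 * k)" by (simp only: power2_eq_square mult_ac)
  finally show ?thesis .
qed

lemma prob_not_covered:
  assumes n: "n \<ge> 1"
  shows "measure_pmf.prob (rows_pmf m n) {A. \<not> covers_patterns n k A}
           \<le> real (card (test_patterns n k)) * (1 - (1/2) ^ (2 * k + 1)) ^ m"
proof -
  have fin: "finite (test_patterns n k)"
    by (rule finite_subset[of _ "Pow {..<n} \<times> {..n}"]) (auto simp: test_patterns_def)
  have "{A. \<not> covers_patterns n k A} =
      (\<Union>(T, j)\<in>test_patterns n k. {A. \<forall>r\<in>set A. \<not> matches (test_pattern T j) r})"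
    by (auto simp: covers_patterns_def)
  then have "measure_pmf.prob (rows_pmf m n) {A. \<not> covers_patterns n k A} \<le>
      (\<Sum>(T, j)\<in>test_patterns n k.
         measure_pmf.prob (rows_pmf m n) {A. \<forall>r\<in>set A. \<not> matches (test_pattern T j) r})"
    using measure_pmf.finite_measure_subadditive_finite[OF fin] by (simp add: case_prod_unfold)
  also have "\<dots> \<le> (\<Sum>(T, j)\<in>test_patterns n k. (1 - (1/2) ^ (2 * k + 1)) ^ m)"
  proof (rule sum_mono, clarify)
    fix T j assume p: "(T, j) \<in> test_patterns n k"
    have "measure_pmf.prob (chain_pmf n) {r. \<not> matches (test_pattern T j) r} =
        1 - measure_pmf.prob (chain_pmf n) {r. matches (test_pattern T j) r}"
      using measure_pmf.prob_compl[of "{r. matches (test_pattern T j) r}" "chain_pmf n"]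
      by (simp add: Compl_eq_Diff_UNIV[symmetric] Collect_neg_eq)
    also have "\<dots> \<le> 1 - (1/2) ^ (2 * k + 1)" using test_pattern_prob[OF n p] by simp
    finally show "measure_pmf.prob (rows_pmf m n) {A. \<forall>r\<in>set A. \<not> matches (test_pattern T j) r}
        \<le> (1 - (1/2) ^ (2 * k + 1)) ^ m"
      unfolding prob_no_row by (intro power_mono) auto
  qed
  finally show ?thesis by simp
qed

lemma prob_identifies_lb:
  assumes n: "n \<ge> 1"
  shows "measure_pmf.prob (rows_pmf m n) {A. identifies_sparse n k A}
           \<ge> 1 - real (card (test_patterns n k)) * (1 - (1/2) ^ (2 * k + 1)) ^ m"
proof -
  have "{A. covers_patterns n k A} \<inter> set_pmf (rows_pmf m n) \<subseteq> {A. identifies_sparse n k A}"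
    using identifies_if_covers set_chain_pmf[OF n] set_rows_pmf by blast
  then have "measure_pmf.prob (rows_pmf m n) {A. covers_patterns n k A}
      \<le> measure_pmf.prob (rows_pmf m n) {A. identifies_sparse n k A}"
    by (subst measure_Int_set_pmf[symmetric]) (rule measure_pmf.finite_measure_mono, auto)
  moreover have "measure_pmf.prob (rows_pmf m n) {A. covers_patterns n k A} =
      1 - measure_pmf.prob (rows_pmf m n) {A. \<not> covers_patterns n k A}"
    using measure_pmf.prob_compl[of "{A. \<not> covers_patterns n k A}" "rows_pmf m n"]
    by (simp add: Compl_eq_Diff_UNIV[symmetric] Collect_neg_eq)
  ultimately show ?thesis using prob_not_covered[OF n, of m k] by linarith
qed
(* (1 - q)^m <= n^(-qc) whenever m >= c ln n, via 1 - q <= exp (-q). *)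
lemma one_minus_pow_le_powr:
  fixes q c :: real
  assumes q: "0 < q" "q \<le> 1" and n: "n \<ge> 1" and m: "real m \<ge> c * ln (real n)"
  shows "(1 - q) ^ m \<le> real n powr (- q * c)"
proof -
  have "(1 - q) ^ m \<le> exp (-q) ^ m"
    using q exp_ge_add_one_self[of "-q"] by (intro power_mono) auto
  also have "\<dots> = exp (real m * (-q))" by (rule exp_of_nat_mult[symmetric])
  also have "\<dots> \<le> exp (c * ln (real n) * (-q))"
    using m q by (intro exp_mono mult_right_mono_neg) auto
  also have "\<dots> = real n powr (- q * c)"
    using n by (simp add: powr_def mult_ac)
  finally show ?thesis .
qed

(* Second claim for any rate c with 2^-(2k+1) c > 2k: the failure probability is
   O(n^(2k - 2^-(2k+1) c)), which tends to 0. *)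
lemma identifies_tendsto_1:
  fixes c :: real and m :: "nat \<Rightarrow> nat"
  assumes rate: "(1/2) ^ (2 * k + 1) * c > real (2 * k)"
    and m: "\<forall>n. real (m n) \<ge> c * ln (real n)"
  shows "(\<lambda>n. measure_pmf.prob (rows_pmf (m n) n) {A. identifies_sparse n k A}) \<longlonglongrightarrow> 1"
proof -
  define q :: real where "q = (1/2) ^ (2 * k + 1)"
  define C :: real where "C = real ((2 * k + 1) ^ 2)"
  define e where "e = real (2 * k) - q * c"
  have "e < 0" using rate by (simp add: e_def q_def)
  have q: "0 < q" "q \<le> 1" unfolding q_def by (simp, rule power_le_one) simp_all
  have lower: "1 - C * real n powr e \<le> measure_pmf.prob (rows_pmf (m n) n) {A. identifies_sparse n k A}"
    if n: "n \<ge> 1" for n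
  proof -
    have "real (card (test_patterns n k)) \<le> C * real n ^ (2 * k)"
      unfolding C_def using card_test_patterns[OF n, of k]
      by (metis of_nat_le_iff of_nat_mult of_nat_power)
    then have "real (card (test_patterns n k)) * (1 - q) ^ m n \<le> (C * real n ^ (2 * k)) * real n powr (- q * c)"
      using one_minus_pow_le_powr[OF q n m[rule_format, of n]] q by (intro mult_mono) auto
    also have "\<dots> = C * (real n powr real (2 * k) * real n powr (- q * c))"
      using n by (simp add: powr_realpow[of "real n" "2 * k", symmetric] del: of_nat_mult)
    also have "\<dots> = C * real n powr e"
      unfolding e_def by (simp flip: powr_add)
    finally show ?thesis using prob_identifies_lb[OF n, where m="m n" and k=k] unfolding q_def by linarith
  qed
  have "(\<lambda>n. real n powr e) \<longlonglongrightarrow> 0"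
    by (rule tendsto_neg_powr[OF \<open>e < 0\<close> filterlim_real_sequentially])
  then have "(\<lambda>n. 1 - C * real n powr e) \<longlonglongrightarrow> 1 - C * 0"
    by (intro tendsto_diff tendsto_mult tendsto_const)
  then have lim: "(\<lambda>n. 1 - C * real n powr e) \<longlonglongrightarrow> 1" by simp
  have below: "eventually (\<lambda>n. 1 - C * real n powr e \<le>
      measure_pmf.prob (rows_pmf (m n) n) {A. identifies_sparse n k A}) sequentially"
    using lower by (intro eventually_sequentiallyI[of 1])
  have above: "eventually (\<lambda>n.
      measure_pmf.prob (rows_pmf (m n) n) {A. identifies_sparse n k A} \<le> 1) sequentially"
    by simp
  show ?thesis by (rule tendsto_sandwich[OF below above lim tendsto_const])
qed

lemma n_le_two_pow: "n \<le> (2::nat) ^ (n - 1)"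
  using less_exp[of "n - 1"] by (cases n) (auto simp: Suc_le_eq)

(* (2k)! <= (2k)^(2k) <= 2^((2k-1) 2k) < (2k + 1) 2^(4k^2 - 2). *)
lemma fact_double_lt:
  assumes "k \<ge> 1"
  shows "fact (2 * k) < (2 * k + 1) * (2::nat) ^ (4 * k\<^sup>2 - 2)"
proof -
  have "fact (2 * k) \<le> (2 * k :: nat) ^ (2 * k)" using fact_le_power[where 'a=nat, of "2 * k"] by simp
  also have "\<dots> \<le> (2 ^ (2 * k - 1)) ^ (2 * k)" using n_le_two_pow by (intro power_mono) auto
  also have "\<dots> = 2 ^ ((2 * k - 1) * (2 * k))" by (simp add: power_mult)
  also have "\<dots> \<le> 2 ^ (4 * k\<^sup>2 - 2)"
    using assms by (intro power_increasing) (auto simp: power2_eq_square algebra_simps)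
  also have "\<dots> < (2 * k + 1) * 2 ^ (4 * k\<^sup>2 - 2)" using assms by simp
  finally show ?thesis .
qed

lemma g_const_rate:
  assumes k: "k \<ge> 1"
  shows "(1/2) ^ (2 * k + 1) * g_const k > real (2 * k)"
proof -
  have exps: "4 * real k ^ 2 + 2 * real k - 1 = real ((2 * k + 1) + (4 * k\<^sup>2 - 2))"
    using k by (simp add: of_nat_diff power2_eq_square algebra_simps)
  have fact_split: "fact (2 * k) = real (2 * k) * fact (2 * k - 1)"
    using k by (cases k) (simp_all add: fact_Suc)
  have "(1/2) ^ (2 * k + 1) * g_const k = (2 * k + 1) * 2 ^ (4 * k\<^sup>2 - 2) / fact (2 * k - 1)"
    unfolding g_const_def exps powr_realpow[of 2, OF zero_less_numeral]
    by (simp add: power_add power_one_over field_simps)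
  moreover have "real (2 * k) * fact (2 * k - 1) < (2 * k + 1) * 2 ^ (4 * k\<^sup>2 - 2)"
    using fact_double_lt[OF k] unfolding fact_split[symmetric]
    by (metis of_nat_fact of_nat_less_iff of_nat_mult of_nat_numeral of_nat_power of_nat_add of_nat_1)
  ultimately show ?thesis by (simp add: pos_less_divide_eq)
qed

theorem theorem3:
  fixes k :: nat
  assumes "k \<ge> 1"
  shows "(\<forall>n m. n \<ge> 5 \<longrightarrow> (\<forall>A\<in>set_pmf (rows_pmf m n). \<forall>r\<in>set A. feasible_measurement n r))
    \<and> (\<exists>g :: nat \<Rightarrow> real.
         (\<forall>m :: nat \<Rightarrow> nat. (\<forall>n. real (m n) \<ge> g k * ln (real n)) \<longrightarrow>
            ((\<lambda>n. measure_pmf.prob (rows_pmf (m n) n) {A. identifies_sparse n k A}) \<longlonglongrightarrow> 1)))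
    \<and> (\<forall>m :: nat \<Rightarrow> nat. (\<forall>n. real (m n) \<ge> g_const k * ln (real n)) \<longrightarrow>
            ((\<lambda>n. measure_pmf.prob (rows_pmf (m n) n) {A. identifies_sparse n k A}) \<longlonglongrightarrow> 1))"
proof -
  have feasible: "\<forall>n m. n \<ge> 5 \<longrightarrow> (\<forall>A\<in>set_pmf (rows_pmf m n). \<forall>r\<in>set A. feasible_measurement n r)"
    using feasible_chain_row set_rows_pmf by blast
  have g_const_works: "\<forall>m :: nat \<Rightarrow> nat. (\<forall>n. real (m n) \<ge> g_const k * ln (real n)) \<longrightarrow>
      ((\<lambda>n. measure_pmf.prob (rows_pmf (m n) n) {A. identifies_sparse n k A}) \<longlonglongrightarrow> 1)"
    using identifies_tendsto_1[OF g_const_rate[OF assms]] by blast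
  then have "\<exists>g :: nat \<Rightarrow> real. \<forall>m :: nat \<Rightarrow> nat. (\<forall>n. real (m n) \<ge> g k * ln (real n)) \<longrightarrow>
      ((\<lambda>n. measure_pmf.prob (rows_pmf (m n) n) {A. identifies_sparse n k A}) \<longlonglongrightarrow> 1)"
    by (intro exI[of _ "\<lambda>_. g_const k"]) simp
  with feasible g_const_works show ?thesis by blast
qed

end
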